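(* Let $\mathbb X$ be a separable reflexive Banach space and $\mu\in\mathbb X$. Fix $\alpha\in(0,\tfrac12)$, $0<p<\alpha$ and $\varepsilon>0$. Let $\hat\mu_1,\ldots,\hat\mu_k$ be random elements of $\mathbb X$, and let $J\subseteq\{1,\ldots,k\}$ have $|J|=(1-\tau)k$, where $0\le\tau<\frac{\alpha-p}{1-p}$. Assume: - the $\hat\mu_j$, $j\in J$, are independent; - $\Pr(\|\hat\mu_j-\mu\|>\varepsilon)\le p$ for all $j\in J$; - the $\hat\mu_j$ with $j\notin J$ are arbitrary. Let $\hat\mu=\mathrm{med}(\hat\mu_1,\ldots,\hat\mu_k)$. Then $$\Pr\big(\|\hat\mu-\mu\|>C_\alpha\varepsilon\big)\le\exp\Big(-k(1-\tau)\,\psi\Big(\tfrac{\alpha-\tau}{1-\tau};p\Big)\Big).$$ Here $C_\alpha=\frac{2(1-\alpha)}{1-2\alpha}$ in general, and $C_\alpha=(1-\alpha)\sqrt{\frac1{1-2\alpha}}$ when $\mathbb X$ is a Hilbert space.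
   Context: $\mathrm{med}(x_1,\ldots,x_k)$ denotes a geometric median, i.e. any minimizer over $y\in\mathbb X$ of $\sum_{j=1}^k\|y-x_j\|$. For $0<p<a<\tfrac12$, $$\psi(a;p)=(1-a)\log\frac{1-a}{1-p}+a\log\frac{a}{p}.$$ *)

theory Defs
  imports "HOL-Probability.Probability"
begin

definition psi :: "real \<Rightarrow> real \<Rightarrow> real" where
  "psi a p = (1 - a) * ln ((1 - a) / (1 - p)) + a * ln (a / p)"

definition is_geom_median :: "nat \<Rightarrow> (nat \<Rightarrow> 'a::real_normed_vector) \<Rightarrow> 'a \<Rightarrow> bool" where
  "is_geom_median k x y \<longleftrightarrow> (\<forall>z. (\<Sum>j=1..k. norm (y - x j)) \<le> (\<Sum>j=1..k. norm (z - x j)))"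

definition separable_space_type :: "'a::metric_space itself \<Rightarrow> bool" where
  "separable_space_type _ \<longleftrightarrow> (\<exists>D::'a set. countable D \<and> closure D = UNIV)"

definition reflexive_space :: "'a::real_normed_vector itself \<Rightarrow> bool" where
  "reflexive_space _ \<longleftrightarrow>
     (\<forall>\<phi> :: ('a \<Rightarrow>\<^sub>L real) \<Rightarrow>\<^sub>L real. \<exists>x::'a. \<forall>f. blinfun_apply \<phi> f = blinfun_apply f x)"

definition hilbert_norm :: "'a::real_normed_vector itself \<Rightarrow> bool" where
  "hilbert_norm _ \<longleftrightarrow>
     (\<exists>ip :: 'a \<Rightarrow> 'a \<Rightarrow> real.
        (\<forall>x y. ip x y = ip y x) \<and>
        (\<forall>y. linear (\<lambda>x. ip x y)) \<and>
        (\<forall>x. x \<noteq> 0 \<longrightarrow> ip x x > 0) \<and>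
        (\<forall>x. norm x = sqrt (ip x x)))"

end

theory Submission
  imports Defs
begin

text \<open>
  If the geometric median z is far from \<mu>, then many of the points x j must be far from \<mu>
  as well, since otherwise moving z towards \<mu> would decrease the sum of the distances
  \<parallel>z - x j\<parallel>. For a general norm it suffices to compare with the full step from z to \<mu>, using
  the triangle inequality. In a Hilbert space one looks at the first-order variation in the
  direction \<mu> - z: for every x j within distance r of \<mu>, the cosine of the angle between
  z - x j and \<mu> - z is at most -sqrt (1 - r^2 / \<parallel>z - \<mu>\<parallel>^2). Either way \<parallel>z - \<mu>\<parallel> > C r
  forces more than \<alpha>k of the x j out of the ball of radius r about \<mu>.
  Taking r = \<epsilon>, at least (\<alpha> - \<tau>)k of the independent estimates then miss \<mu> by more than \<epsilon>.
  Their number is dominated by a binomial variable with parameter p, and the optimised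
  Chernoff bound for it is exp (-n \<psi>(a;p)).
\<close>

section \<open>Chernoff bound for the number of misses\<close>

lemma exp_chernoff_binomial_optimum:
  fixes a p :: real
  assumes "0 < p" "p < a" "a < 1"
  defines "l \<equiv> ln (a * (1 - p) / (p * (1 - a)))"
  shows "l > 0" and "exp (- l * a) * (1 - p + p * exp l) = exp (- psi a p)"
proof -
  have ratio: "a * (1 - p) / (p * (1 - a)) > 1"
    using assms(1-3) by (simp add: field_simps)
  then show "l > 0"
    unfolding l_def by simp
  have "1 - p + p * exp l = (1 - p) / (1 - a)"
    using ratio assms(1-3) unfolding l_def by (simp add: field_simps)
  then have ln_mgf: "ln (1 - p + p * exp l) = ln (1 - p) - ln (1 - a)"
    using assms(1-3) by (simp add: ln_div)
  have l_eq: "l = ln a + ln (1 - p) - ln p - ln (1 - a)"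
    using assms(1-3) unfolding l_def by (simp add: ln_div ln_mult)
  have "psi a p = (1 - a) * (ln (1 - a) - ln (1 - p)) + a * (ln a - ln p)"
    using assms(1-3) unfolding psi_def by (simp add: ln_div)
  then have "- l * a + ln (1 - p + p * exp l) = - psi a p"
    unfolding ln_mgf by (simp add: l_eq algebra_simps)
  moreover have "1 - p + p * exp l > 0"
    using assms(1-3) by (simp add: add_pos_nonneg)
  ultimately show "exp (- l * a) * (1 - p + p * exp l) = exp (- psi a p)"
    by (metis exp_add exp_ln)
qed

lemma nn_integral_exp_indicator_le:
  assumes "prob_space M" "B \<in> sets M" "measure M B \<le> p" "0 \<le> l"
  shows "(\<integral>\<^sup>+x. ennreal (exp (l * indicator B x)) \<partial>M) \<le> ennreal (1 - p + p * exp l)"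
proof -
  interpret prob_space M by fact
  have "(\<integral>\<^sup>+x. ennreal (exp (l * indicator B x)) \<partial>M)
      = (\<integral>\<^sup>+x. ennreal (1 + (exp l - 1) * indicator B x) \<partial>M)"
    by (intro nn_integral_cong) (simp add: indicator_def)
  also have "\<dots> = ennreal (\<integral>x. 1 + (exp l - 1) * indicator B x \<partial>M)"
  proof (rule nn_integral_eq_integral)
    show "integrable M (\<lambda>x. 1 + (exp l - 1) * indicator B x)"
      using assms(2) by (auto simp: emeasure_eq_measure)
    show "AE x in M. 0 \<le> 1 + (exp l - 1) * indicator B x"
      using assms(4) by (simp add: indicator_def)
  qed
  also have "\<dots> = ennreal (1 + (exp l - 1) * measure M B)"
    using assms(2) by (subst Bochner_Integration.integral_add) (auto simp: emeasure_eq_measure prob_space)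
  also have "\<dots> \<le> ennreal (1 - p + p * exp l)"
  proof (rule ennreal_leI)
    have "(exp l - 1) * measure M B \<le> (exp l - 1) * p"
      using assms(3,4) by (intro mult_left_mono) auto
    then show "1 + (exp l - 1) * measure M B \<le> 1 - p + p * exp l"
      by (simp add: algebra_simps)
  qed
  finally show ?thesis .
qed

lemma nn_integral_exp_sum_indicator_le:
  fixes X :: "nat \<Rightarrow> 'b \<Rightarrow> 'a::topological_space"
  assumes "prob_space M" and fin: "finite J" and ind: "prob_space.indep_vars M (\<lambda>_. borel) X J"
    and U: "U \<in> sets borel"
    and tail: "\<And>j. j \<in> J \<Longrightarrow> measure M {\<omega> \<in> space M. X j \<omega> \<in> U} \<le> p"
    and "0 \<le> p" "0 \<le> l"
  shows "(\<integral>\<^sup>+\<omega>. ennreal (exp (l * (\<Sum>j\<in>J. indicator U (X j \<omega>)))) \<partial>M)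
           \<le> ennreal ((1 - p + p * exp l) ^ card J)"
proof -
  interpret prob_space M by fact
  have [measurable]: "X j \<in> borel_measurable M" if "j \<in> J" for j
    using ind that unfolding indep_vars_def2 by auto
  have mgf: "(\<integral>\<^sup>+\<omega>. ennreal (exp (l * indicator U (X j \<omega>))) \<partial>M) \<le> ennreal (1 - p + p * exp l)"
    if j: "j \<in> J" for j
  proof -
    have "(\<integral>\<^sup>+\<omega>. ennreal (exp (l * indicator U (X j \<omega>))) \<partial>M)
        = (\<integral>\<^sup>+\<omega>. ennreal (exp (l * indicator (X j -` U \<inter> space M) \<omega>)) \<partial>M)"
      by (intro nn_integral_cong) (simp add: indicator_def)
    also have "\<dots> \<le> ennreal (1 - p + p * exp l)"
      using tail[OF j] j U assms(7)
      by (intro nn_integral_exp_indicator_le prob_space_axioms) (auto simp: vimage_def Int_def conj_commute)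
    finally show ?thesis .
  qed
  have "(\<integral>\<^sup>+\<omega>. ennreal (exp (l * (\<Sum>j\<in>J. indicator U (X j \<omega>)))) \<partial>M)
      = (\<integral>\<^sup>+\<omega>. (\<Prod>j\<in>J. ennreal (exp (l * indicator U (X j \<omega>)))) \<partial>M)"
    by (simp add: sum_distrib_left exp_sum[OF fin] prod_ennreal)
  also have "\<dots> = (\<Prod>j\<in>J. \<integral>\<^sup>+\<omega>. ennreal (exp (l * indicator U (X j \<omega>))) \<partial>M)"
    using U by (intro indep_vars_nn_integral fin indep_vars_compose2[OF ind]) auto
  also have "\<dots> \<le> (\<Prod>j\<in>J. ennreal (1 - p + p * exp l))"
    by (intro prod_mono_ennreal mgf)
  also have "\<dots> = ennreal ((1 - p + p * exp l) ^ card J)"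
  proof -
    have "0 \<le> p * (exp l - 1)"
      using assms(6,7) by simp
    then show ?thesis
      by (simp add: ennreal_power algebra_simps del: ennreal_plus)
  qed
  finally show ?thesis .
qed

lemma real_card_filter_eq_sum_indicator:
  "finite J \<Longrightarrow> real (card {j\<in>J. x j \<in> U}) = (\<Sum>j\<in>J. indicator U (x j))"
  by (simp add: indicator_def sum.If_cases Int_def)

lemma prob_card_hits_ge_le_exp_psi:
  fixes X :: "nat \<Rightarrow> 'b \<Rightarrow> 'a::topological_space"
  assumes "prob_space M" and fin: "finite J" and ind: "prob_space.indep_vars M (\<lambda>_. borel) X J"
    and U[measurable]: "U \<in> sets borel"
    and tail: "\<And>j. j \<in> J \<Longrightarrow> measure M {\<omega> \<in> space M. X j \<omega> \<in> U} \<le> p"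
    and p: "0 < p" "p < a" "a < 1"
  shows "{\<omega> \<in> space M. a * real (card J) \<le> real (card {j\<in>J. X j \<omega> \<in> U})} \<in> sets M"
    and "measure M {\<omega> \<in> space M. a * real (card J) \<le> real (card {j\<in>J. X j \<omega> \<in> U})}
           \<le> exp (- real (card J) * psi a p)"
proof -
  interpret prob_space M by fact
  have [measurable]: "X j \<in> borel_measurable M" if "j \<in> J" for j
    using ind that unfolding indep_vars_def2 by auto
  define S where "S \<omega> = (\<Sum>j\<in>J. indicator U (X j \<omega>) :: real)" for \<omega>
  have "real (card {j\<in>J. X j \<omega> \<in> U}) = S \<omega>" for \<omega>
    unfolding S_def by (rule real_card_filter_eq_sum_indicator[OF fin])
  then have hits: "{\<omega> \<in> space M. a * real (card J) \<le> real (card {j\<in>J. X j \<omega> \<in> U})}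
      = {\<omega> \<in> space M. S \<omega> \<ge> a * real (card J)}"
    by simp
  show "{\<omega> \<in> space M. a * real (card J) \<le> real (card {j\<in>J. X j \<omega> \<in> U})} \<in> sets M"
    unfolding hits S_def by measurable
  define l where "l = ln (a * (1 - p) / (p * (1 - a)))"
  note optimum = exp_chernoff_binomial_optimum[OF p, folded l_def]
  have "(\<integral>\<^sup>+\<omega>\<in>space M. exp (l * S \<omega>) \<partial>M) = (\<integral>\<^sup>+\<omega>. exp (l * S \<omega>) \<partial>M)"
    by (intro nn_integral_cong) simp
  also have "\<dots> \<le> ennreal ((1 - p + p * exp l) ^ card J)"
    unfolding S_def using p(1) optimum(1)
    by (intro nn_integral_exp_sum_indicator_le[OF assms(1) fin ind U tail]) auto
  finally have mgf: "(\<integral>\<^sup>+\<omega>\<in>space M. exp (l * S \<omega>) \<partial>M) \<le> ennreal ((1 - p + p * exp l) ^ card J)" .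
  have "emeasure M {\<omega> \<in> space M. S \<omega> \<ge> a * real (card J)}
      \<le> ennreal (exp (- l * (a * real (card J)))) * (\<integral>\<^sup>+\<omega>\<in>space M. exp (l * S \<omega>) \<partial>M)"
    unfolding S_def by (intro Chernoff_ineq_nn_integral_ge optimum(1)) auto
  also have "\<dots> \<le> ennreal (exp (- l * (a * real (card J)))) * ennreal ((1 - p + p * exp l) ^ card J)"
    by (rule mult_left_mono[OF mgf]) simp
  also have "exp (- l * (a * real (card J))) = exp (- l * a) ^ card J"
    by (simp only: exp_of_nat_mult[symmetric] mult_ac)
  also have "ennreal (exp (- l * a) ^ card J) * ennreal ((1 - p + p * exp l) ^ card J)
      = ennreal (exp (- psi a p) ^ card J)"
  proof -
    have "0 \<le> 1 - p + p * exp l"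
      using p by (simp add: add_nonneg_nonneg)
    then show ?thesis
      by (simp only: ennreal_mult''[symmetric] zero_le_power power_mult_distrib[symmetric] optimum(2))
  qed
  also have "exp (- psi a p) ^ card J = exp (- real (card J) * psi a p)"
    by (simp only: exp_of_nat_mult[symmetric] mult_minus_left mult_minus_right)
  finally show "measure M {\<omega> \<in> space M. a * real (card J) \<le> real (card {j\<in>J. X j \<omega> \<in> U})}
           \<le> exp (- real (card J) * psi a p)"
    unfolding hits by (simp add: emeasure_eq_measure)
qed

section \<open>Many points are far from a far geometric median\<close>

lemma sum_filter_split:
  "finite I \<Longrightarrow> sum f I = sum f {j\<in>I. P j} + sum f {j\<in>I. \<not> P j}"
  using sum.Int_Diff[of I f "{j. P j}"] by (simp add: Int_def set_diff_eq)

lemma real_card_le_eq_diff_card_gt: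
  fixes f :: "nat \<Rightarrow> real"
  shows "real (card {j\<in>{1..k}. f j \<le> r}) = real k - real (card {j\<in>{1..k}. r < f j})"
proof -
  have "card {j\<in>{1..k}. f j \<le> r} + card {j\<in>{1..k}. r < f j} = k"
    using sum_filter_split[of "{1..k}" "\<lambda>_. 1::nat" "\<lambda>j. f j \<le> r"] by (simp add: not_le)
  then show ?thesis
    by (simp only: of_nat_add[symmetric] eq_diff_eq)
qed

lemma geom_median_sum_diff_nonneg:
  assumes "is_geom_median k x z"
  shows "0 \<le> (\<Sum>j=1..k. norm (z + v - x j) - norm (z - x j))"
  using assms unfolding is_geom_median_def by (simp add: sum_subtractf)

lemma geom_median_balance:
  fixes x :: "nat \<Rightarrow> 'a::real_normed_vector"
  assumes "is_geom_median k x z"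
  shows "real (card {j\<in>{1..k}. norm (x j - \<mu>) \<le> r}) * (norm (z - \<mu>) - 2 * r)
           \<le> real (card {j\<in>{1..k}. r < norm (x j - \<mu>)}) * norm (z - \<mu>)"
proof -
  define D where "D = norm (z - \<mu>)"
  define N where "N = {j\<in>{1..k}. norm (x j - \<mu>) \<le> r}"
  define F where "F = {j\<in>{1..k}. r < norm (x j - \<mu>)}"
  define d where "d j = norm (\<mu> - x j) - norm (z - x j)" for j
  have d_near: "d j \<le> 2 * r - D" if "j \<in> N" for j
    using that norm_triangle_ineq[of "z - x j" "x j - \<mu>"]
    unfolding d_def D_def N_def by (simp add: norm_minus_commute)
  have d_far: "d j \<le> D" for j
    using norm_triangle_ineq[of "\<mu> - z" "z - x j"]
    unfolding d_def D_def by (simp add: norm_minus_commute)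
  have "0 \<le> (\<Sum>j=1..k. d j)"
    using geom_median_sum_diff_nonneg[OF assms, of "\<mu> - z"] by (simp add: d_def)
  also have "\<dots> = sum d N + sum d F"
    unfolding N_def F_def
    using sum_filter_split[of "{1..k}" d "\<lambda>j. norm (x j - \<mu>) \<le> r"] by (simp add: not_le)
  also have "\<dots> \<le> (\<Sum>j\<in>N. 2 * r - D) + (\<Sum>j\<in>F. D)"
    by (intro add_mono sum_mono d_near d_far)
  finally show ?thesis
    unfolding N_def F_def D_def by (simp add: algebra_simps)
qed

lemma many_far_of_balance:
  fixes n b \<alpha> r D :: real
  assumes "0 < n" "0 < \<alpha>" "\<alpha> < 1/2" "0 < r"
    and balance: "(n - b) * (D - 2 * r) \<le> b * D"
    and far: "2 * (1 - \<alpha>) / (1 - 2 * \<alpha>) * r < D"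
  shows "\<alpha> * n < b"
proof (rule ccontr)
  assume "\<not> \<alpha> * n < b"
  have gap: "0 < D * (1 - 2 * \<alpha>) - 2 * (1 - \<alpha>) * r"
    using far assms(3) by (simp add: field_simps)
  moreover have "(1 - 2 * \<alpha>) * r \<le> 2 * (1 - \<alpha>) * r"
    using assms(4) by (intro mult_right_mono) auto
  ultimately have "(1 - 2 * \<alpha>) * r < (1 - 2 * \<alpha>) * D"
    by (simp add: algebra_simps)
  then have "r < D"
    using assms(3) by simp
  then have "n * (D - 2 * r) \<le> b * (2 * D - 2 * r)"
    using balance by (simp add: algebra_simps)
  also have "\<dots> \<le> \<alpha> * n * (2 * D - 2 * r)"
    using \<open>\<not> \<alpha> * n < b\<close> \<open>r < D\<close> by (intro mult_right_mono) auto
  finally have "n * (D * (1 - 2 * \<alpha>) - 2 * (1 - \<alpha>) * r) \<le> 0"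
    by (simp add: algebra_simps)
  then show False
    using mult_pos_pos[OF assms(1) gap] by linarith
qed

lemma geom_median_many_far_banach:
  fixes x :: "nat \<Rightarrow> 'a::real_normed_vector"
  assumes "is_geom_median k x z" "0 < k" "0 < \<alpha>" "\<alpha> < 1/2" "0 < r"
    and "2 * (1 - \<alpha>) / (1 - 2 * \<alpha>) * r < norm (z - \<mu>)"
  shows "\<alpha> * k < real (card {j\<in>{1..k}. r < norm (x j - \<mu>)})"
proof (rule many_far_of_balance)
  from geom_median_balance[OF assms(1), of \<mu> r, unfolded real_card_le_eq_diff_card_gt]
  show "(real k - real (card {j\<in>{1..k}. r < norm (x j - \<mu>)})) * (norm (z - \<mu>) - 2 * r)
      \<le> real (card {j\<in>{1..k}. r < norm (x j - \<mu>)}) * norm (z - \<mu>)" .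
qed (use assms in auto)

lemma sqrt_le_tangent:
  fixes A h :: real
  assumes "0 < A" "0 \<le> A\<^sup>2 + h"
  shows "sqrt (A\<^sup>2 + h) \<le> A + h / (2 * A)"
proof (rule real_le_lsqrt)
  have "2 * A * (A + h / (2 * A)) = A\<^sup>2 + (A\<^sup>2 + h)"
    using assms(1) by (simp add: field_simps power2_eq_square)
  then have "0 \<le> 2 * A * (A + h / (2 * A))"
    using assms(2) by (metis add_nonneg_nonneg zero_le_power2)
  then show "0 \<le> A + h / (2 * A)"
    using assms(1) by (simp add: zero_le_mult_iff)
  have "(A + h / (2 * A))\<^sup>2 = A\<^sup>2 + h + (h / (2 * A))\<^sup>2"
    using assms(1) by (simp add: power2_eq_square field_simps)
  then show "A\<^sup>2 + h \<le> (A + h / (2 * A))\<^sup>2"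
    by simp
qed

text \<open>
  With n = \<parallel>v\<parallel>, s = ip v w and A = \<parallel>v + w\<parallel> for \<parallel>w\<parallel> = D, this says that the cosine of the angle
  between v + w and w is at least sqrt (D^2 - r^2) / D whenever \<parallel>v\<parallel> \<le> r < D.
\<close>

lemma sqrt_sq_diff_mult_le:
  fixes r D n s A :: real
  assumes "0 < r" "r < D" "0 \<le> n" "n \<le> r" "- (n * D) \<le> s" "0 \<le> A" "A\<^sup>2 = n\<^sup>2 + 2 * s + D\<^sup>2"
  shows "sqrt (D\<^sup>2 - r\<^sup>2) * A \<le> D\<^sup>2 + s"
proof -
  have rD: "r\<^sup>2 \<le> D\<^sup>2" "n\<^sup>2 \<le> r\<^sup>2"
    using assms by (simp_all add: power_mono)
  have "n * D < D * D"
    using assms(2-4) by (intro mult_strict_right_mono) auto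
  then have pos: "0 \<le> D\<^sup>2 + s"
    using assms(5) by (simp add: power2_eq_square)
  have "(D\<^sup>2 + s)\<^sup>2 - (D\<^sup>2 - r\<^sup>2) * A\<^sup>2 = (s + r\<^sup>2)\<^sup>2 + (r\<^sup>2 - n\<^sup>2) * (D\<^sup>2 - r\<^sup>2)"
    unfolding assms(7) by (simp add: power2_eq_square algebra_simps)
  moreover have "0 \<le> (r\<^sup>2 - n\<^sup>2) * (D\<^sup>2 - r\<^sup>2)"
    using rD by simp
  ultimately have "(D\<^sup>2 - r\<^sup>2) * A\<^sup>2 \<le> (D\<^sup>2 + s)\<^sup>2"
    using zero_le_power2[of "s + r\<^sup>2"] by linarith
  then have "sqrt ((D\<^sup>2 - r\<^sup>2) * A\<^sup>2) \<le> D\<^sup>2 + s"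
    by (rule real_le_lsqrt[OF pos])
  then show ?thesis
    using assms(6) by (simp add: real_sqrt_mult)
qed

lemma nonneg_if_linear_quadratic_pos_nonneg:
  fixes Q K :: real
  assumes "\<And>t. 0 < t \<Longrightarrow> 0 \<le> t * Q + t\<^sup>2 * K"
  shows "0 \<le> Q"
proof (rule ccontr)
  assume "\<not> 0 \<le> Q"
  then have Q: "Q < 0"
    by simp
  have K: "0 < \<bar>K\<bar> + 1"
    using abs_ge_zero[of K] by linarith
  define t where "t = - Q / (\<bar>K\<bar> + 1)"
  have t: "0 < t"
    unfolding t_def using Q K by (intro divide_pos_pos) auto
  have "Q + t * K \<le> Q + t * \<bar>K\<bar>"
    using t by (simp add: mult_left_mono)
  also have "\<dots> = Q / (\<bar>K\<bar> + 1)"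
    unfolding t_def by (simp add: field_simps)
  also have "\<dots> < 0"
    using Q K by (rule divide_neg_pos)
  finally have "t * (Q + t * K) < 0"
    using t by (simp add: mult_pos_neg)
  then show False
    using assms[OF t] by (simp add: power2_eq_square algebra_simps)
qed

locale norm_inner =
  fixes ip :: "'a::real_normed_vector \<Rightarrow> 'a \<Rightarrow> real"
  assumes ip_add_left: "ip (u + v) w = ip u w + ip v w"
    and ip_scaleR_left: "ip (c *\<^sub>R u) w = c * ip u w"
    and ip_self: "ip u u = (norm u)\<^sup>2"
    and norm_add_scaleR_sq: "(norm (u + t *\<^sub>R w))\<^sup>2 = (norm u)\<^sup>2 + 2 * t * ip u w + t\<^sup>2 * (norm w)\<^sup>2"
    and neg_norm_mult_le_ip: "- (norm u * norm w) \<le> ip u w"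

lemma hilbert_normE:
  fixes T :: "'a::real_normed_vector itself"
  assumes "hilbert_norm T"
  obtains ip :: "'a \<Rightarrow> 'a \<Rightarrow> real" where "norm_inner ip"
proof -
  obtain ip :: "'a \<Rightarrow> 'a \<Rightarrow> real" where sym: "\<And>u w. ip u w = ip w u"
    and lin: "\<And>w. linear (\<lambda>u. ip u w)" and pos: "\<And>u. u \<noteq> 0 \<Longrightarrow> ip u u > 0"
    and nrm: "\<And>u. norm u = sqrt (ip u u)"
    using assms unfolding hilbert_norm_def by blast
  have add: "ip (u + v) w = ip u w + ip v w" for u v w
    using lin[of w] by (simp add: linear_iff)
  have scale: "ip (c *\<^sub>R u) w = c * ip u w" for c u w
    using lin[of w] by (simp add: linear_iff)
  have sq: "ip u u = (norm u)\<^sup>2" for u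
  proof (cases "u = 0")
    case True
    then show ?thesis
      using scale[of 0 0 0] by simp
  next
    case False
    then show ?thesis
      using pos[OF False] nrm[of u] by simp
  qed
  have expand: "(norm (u + t *\<^sub>R w))\<^sup>2 = (norm u)\<^sup>2 + 2 * t * ip u w + t\<^sup>2 * (norm w)\<^sup>2" for u t w
  proof -
    have "ip (u + t *\<^sub>R w) (u + t *\<^sub>R w) = ip u u + 2 * t * ip u w + t\<^sup>2 * ip w w"
      using sym[of u "u + t *\<^sub>R w"] sym[of w "u + t *\<^sub>R w"] sym[of w u]
      by (simp add: add scale power2_eq_square algebra_simps)
    then show ?thesis
      unfolding sq[symmetric] .
  qed
  have "- (norm u * norm w) \<le> ip u w" for u w
  proof -
    have "\<bar>norm u - norm w\<bar>\<^sup>2 \<le> (norm (u + w))\<^sup>2"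
      using norm_triangle_ineq3[of u "- w"] by (intro power_mono) auto
    then have "(norm u - norm w)\<^sup>2 \<le> (norm (u + 1 *\<^sub>R w))\<^sup>2"
      by simp
    then show ?thesis
      unfolding expand by (simp add: power2_eq_square algebra_simps)
  qed
  with add scale sq expand have "norm_inner ip"
    by unfold_locales
  then show ?thesis
    by (rule that)
qed

context norm_inner
begin

lemma near_point_angle:
  assumes "0 < r" "norm (x - \<mu>) \<le> r" "r < norm (z - \<mu>)"
  shows "0 < norm (z - x)"
    and "ip (z - x) (\<mu> - z) \<le> - sqrt ((norm (z - \<mu>))\<^sup>2 - r\<^sup>2) * norm (z - x)"
proof -
  define D where "D = norm (z - \<mu>)"
  define v where "v = x - \<mu>"
  define w where "w = \<mu> - z"
  have nw: "norm w = D"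
    unfolding w_def D_def by (rule norm_minus_commute)
  have zx: "z - x = (-1) *\<^sub>R (v + w)"
    unfolding v_def w_def by (simp add: algebra_simps)
  have "D \<le> norm (z - x) + norm v"
    unfolding D_def v_def using norm_triangle_ineq[of "z - x" "x - \<mu>"] by simp
  then show "0 < norm (z - x)"
    using assms unfolding D_def v_def by linarith
  have "norm (z - x) = norm (v + w)"
    unfolding zx norm_scaleR by simp
  then have "(norm (z - x))\<^sup>2 = (norm v)\<^sup>2 + 2 * ip v w + D\<^sup>2"
    using norm_add_scaleR_sq[of v 1 w] nw by simp
  then have "sqrt (D\<^sup>2 - r\<^sup>2) * norm (z - x) \<le> D\<^sup>2 + ip v w"
    using assms neg_norm_mult_le_ip[of v w] nw unfolding D_def v_def
    by (intro sqrt_sq_diff_mult_le) auto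
  moreover have "ip (z - x) w = - (ip v w + D\<^sup>2)"
    unfolding zx ip_scaleR_left ip_add_left ip_self nw by simp
  ultimately show "ip (z - x) (\<mu> - z) \<le> - sqrt ((norm (z - \<mu>))\<^sup>2 - r\<^sup>2) * norm (z - x)"
    unfolding w_def D_def by simp
qed

lemma norm_add_scaleR_le_first_order:
  assumes "0 < norm a"
  shows "norm (a + t *\<^sub>R w) - norm a \<le> t * (ip a w / norm a) + t\<^sup>2 * ((norm w)\<^sup>2 / (2 * norm a))"
proof -
  define h where "h = 2 * t * ip a w + t\<^sup>2 * (norm w)\<^sup>2"
  have sq_eq: "(norm (a + t *\<^sub>R w))\<^sup>2 = (norm a)\<^sup>2 + h"
    unfolding h_def by (simp only: norm_add_scaleR_sq add.assoc)
  have "norm (a + t *\<^sub>R w) = sqrt ((norm a)\<^sup>2 + h)"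
    by (simp only: sq_eq[symmetric] real_sqrt_abs abs_norm_cancel)
  also have "\<dots> \<le> norm a + h / (2 * norm a)"
    using assms by (intro sqrt_le_tangent) (simp_all flip: sq_eq)
  finally show ?thesis
    using assms unfolding h_def by (simp add: field_simps)
qed

lemma geom_median_balance_hilbert:
  fixes x :: "nat \<Rightarrow> 'a"
  assumes gm: "is_geom_median k x z" and r: "0 < r" "r < norm (z - \<mu>)"
  shows "real (card {j\<in>{1..k}. norm (x j - \<mu>) \<le> r}) * sqrt ((norm (z - \<mu>))\<^sup>2 - r\<^sup>2)
           \<le> real (card {j\<in>{1..k}. r < norm (x j - \<mu>)}) * norm (z - \<mu>)"
proof -
  define D where "D = norm (z - \<mu>)"
  define w where "w = \<mu> - z"
  define s where "s = sqrt (D\<^sup>2 - r\<^sup>2)"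
  define N where "N = {j\<in>{1..k}. norm (x j - \<mu>) \<le> r}"
  define F where "F = {j\<in>{1..k}. r < norm (x j - \<mu>)}"
  define a where "a j = z - x j" for j
  have nw: "norm w = D"
    unfolding w_def D_def by (rule norm_minus_commute)
  have near: "0 < norm (a j)" "ip (a j) w \<le> - s * norm (a j)" if "j \<in> N" for j
    using near_point_angle[OF r(1) _ r(2), of "x j"] that
    unfolding a_def w_def s_def D_def N_def by auto
  define Q where "Q = (\<Sum>j\<in>N. ip (a j) w / norm (a j)) + real (card F) * D"
  define K where "K = (\<Sum>j\<in>N. D\<^sup>2 / (2 * norm (a j)))"
  have "0 \<le> t * Q + t\<^sup>2 * K" if t: "0 < t" for t
  proof -
    have "0 \<le> (\<Sum>j=1..k. norm (a j + t *\<^sub>R w) - norm (a j))"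
      using geom_median_sum_diff_nonneg[OF gm, of "t *\<^sub>R w"] by (simp add: a_def algebra_simps)
    also have "\<dots> = (\<Sum>j\<in>N. norm (a j + t *\<^sub>R w) - norm (a j))
        + (\<Sum>j\<in>F. norm (a j + t *\<^sub>R w) - norm (a j))"
      unfolding N_def F_def
      using sum_filter_split[of "{1..k}" _ "\<lambda>j. norm (x j - \<mu>) \<le> r"] by (simp add: not_le)
    also have "\<dots> \<le> (\<Sum>j\<in>N. t * (ip (a j) w / norm (a j)) + t\<^sup>2 * (D\<^sup>2 / (2 * norm (a j))))
        + (\<Sum>j\<in>F. t * D)"
    proof (intro add_mono sum_mono)
      show "norm (a j + t *\<^sub>R w) - norm (a j)
          \<le> t * (ip (a j) w / norm (a j)) + t\<^sup>2 * (D\<^sup>2 / (2 * norm (a j)))" if "j \<in> N" for j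
        using norm_add_scaleR_le_first_order[OF near(1)[OF that], of t w] unfolding nw .
      show "norm (a j + t *\<^sub>R w) - norm (a j) \<le> t * D" for j
        using norm_triangle_ineq[of "a j" "t *\<^sub>R w"] t nw by simp
    qed
    also have "\<dots> = t * Q + t\<^sup>2 * K"
      unfolding Q_def K_def by (simp add: sum.distrib sum_distrib_left algebra_simps)
    finally show ?thesis .
  qed
  then have "0 \<le> Q"
    by (rule nonneg_if_linear_quadratic_pos_nonneg)
  moreover have "(\<Sum>j\<in>N. ip (a j) w / norm (a j)) \<le> (\<Sum>j\<in>N. - s)"
    using near by (intro sum_mono) (simp add: divide_le_eq)
  ultimately show ?thesis
    unfolding Q_def N_def F_def s_def D_def by simp
qed

end

lemma one_le_hilbert_median_constant:
  fixes \<alpha> :: real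
  assumes "0 < \<alpha>" "\<alpha> < 1/2"
  shows "1 \<le> (1 - \<alpha>) * sqrt (1 / (1 - 2 * \<alpha>))"
proof -
  have "sqrt ((1 - \<alpha>)\<^sup>2 * (1 / (1 - 2 * \<alpha>))) = (1 - \<alpha>) * sqrt (1 / (1 - 2 * \<alpha>))"
    using assms by (simp only: real_sqrt_mult real_sqrt_abs)
  moreover have "1 \<le> (1 - \<alpha>)\<^sup>2 * (1 / (1 - 2 * \<alpha>))"
    using assms by (simp add: field_simps power2_eq_square)
  ultimately show ?thesis
    by (metis real_sqrt_ge_1_iff)
qed

lemma many_far_of_balance_hilbert:
  fixes n b \<alpha> r D :: real
  assumes "0 < n" "0 < \<alpha>" "\<alpha> < 1/2" "0 < r" "r < D"
    and balance: "(n - b) * sqrt (D\<^sup>2 - r\<^sup>2) \<le> b * D"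
    and far: "(1 - \<alpha>) * sqrt (1 / (1 - 2 * \<alpha>)) * r < D"
  shows "\<alpha> * n < b"
proof (rule ccontr)
  assume "\<not> \<alpha> * n < b"
  define s where "s = sqrt (D\<^sup>2 - r\<^sup>2)"
  have rD: "r\<^sup>2 \<le> D\<^sup>2"
    using assms(4,5) by (simp add: power_mono)
  then have "0 \<le> s"
    unfolding s_def by simp
  then have "(1 - \<alpha>) * n * s \<le> (n - b) * s"
    using \<open>\<not> \<alpha> * n < b\<close> by (intro mult_right_mono) (auto simp: algebra_simps)
  also have "\<dots> \<le> b * D"
    using balance unfolding s_def .
  also have "\<dots> \<le> \<alpha> * n * D"
    using \<open>\<not> \<alpha> * n < b\<close> assms(4,5) by (intro mult_right_mono) auto
  finally have "n * ((1 - \<alpha>) * s) \<le> n * (\<alpha> * D)"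
    by (simp add: algebra_simps)
  then have "(1 - \<alpha>) * s \<le> \<alpha> * D"
    using assms(1) by simp
  then have "((1 - \<alpha>) * s)\<^sup>2 \<le> (\<alpha> * D)\<^sup>2"
    using \<open>0 \<le> s\<close> assms(3) by (intro power_mono) auto
  then have small_cos: "(1 - \<alpha>)\<^sup>2 * (D\<^sup>2 - r\<^sup>2) \<le> \<alpha>\<^sup>2 * D\<^sup>2"
    using rD unfolding s_def by (simp add: power_mult_distrib)
  have "((1 - \<alpha>) * sqrt (1 / (1 - 2 * \<alpha>)) * r)\<^sup>2 < D\<^sup>2"
    using far assms(2-4) by (intro power_strict_mono) auto
  moreover have "((1 - \<alpha>) * sqrt (1 / (1 - 2 * \<alpha>)) * r)\<^sup>2 = (1 - \<alpha>)\<^sup>2 * r\<^sup>2 / (1 - 2 * \<alpha>)"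
    using assms(3) by (simp add: power_mult_distrib)
  ultimately have "(1 - \<alpha>)\<^sup>2 * r\<^sup>2 < D\<^sup>2 * (1 - 2 * \<alpha>)"
    using assms(3) by (simp add: pos_divide_less_eq)
  with small_cos show False
    by (simp add: power2_eq_square algebra_simps)
qed

lemma geom_median_many_far_hilbert:
  fixes x :: "nat \<Rightarrow> 'a::real_normed_vector"
  assumes "is_geom_median k x z" "hilbert_norm TYPE('a)" "0 < k" "0 < \<alpha>" "\<alpha> < 1/2" "0 < r"
    and far: "(1 - \<alpha>) * sqrt (1 / (1 - 2 * \<alpha>)) * r < norm (z - \<mu>)"
  shows "\<alpha> * k < real (card {j\<in>{1..k}. r < norm (x j - \<mu>)})"
proof -
  have "r \<le> (1 - \<alpha>) * sqrt (1 / (1 - 2 * \<alpha>)) * r"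
    using one_le_hilbert_median_constant[OF assms(4,5)] assms(6) by simp
  then have "r < norm (z - \<mu>)"
    using far by linarith
  obtain ip :: "'a \<Rightarrow> 'a \<Rightarrow> real" where "norm_inner ip"
    using assms(2) by (rule hilbert_normE)
  note balance = norm_inner.geom_median_balance_hilbert[OF this assms(1,6) \<open>r < norm (z - \<mu>)\<close>,
      unfolded real_card_le_eq_diff_card_gt]
  show ?thesis
    using assms(3) by (intro many_far_of_balance_hilbert[OF _ assms(4-6) \<open>r < norm (z - \<mu>)\<close> balance far]) simp
qed

lemma card_filter_add_card_le:
  assumes "finite I" "J \<subseteq> I"
  shows "card {j\<in>I. P j} + card J \<le> card {j\<in>J. P j} + card I"
proof -
  have "finite J"
    using assms finite_subset by blast
  then have "card {j\<in>I. P j} \<le> card ({j\<in>J. P j} \<union> (I - J))"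
    using assms by (intro card_mono) auto
  also have "\<dots> \<le> card {j\<in>J. P j} + card (I - J)"
    by (rule card_Un_le)
  moreover have "card (I - J) = card I - card J" "card J \<le> card I"
    using assms \<open>finite J\<close> by (simp_all add: card_Diff_subset card_mono)
  ultimately show ?thesis
    by linarith
qed

lemma card_filter_subset_ge:
  assumes J: "J \<subseteq> {1..k}" and card_J: "real (card J) = (1 - \<tau>) * real k"
    and many: "\<alpha> * k < real (card {j\<in>{1..k}. P j})"
  shows "(\<alpha> - \<tau>) * real k \<le> real (card {j\<in>J. P j})"
proof -
  have "card {j\<in>{1..k}. P j} + card J \<le> card {j\<in>J. P j} + k"
    using card_filter_add_card_le[OF finite_atLeastAtMost J] by simp
  then have "real (card {j\<in>{1..k}. P j}) + real (card J) \<le> real (card {j\<in>J. P j}) + real k"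
    by (simp only: of_nat_add[symmetric] of_nat_le_iff)
  moreover have "(\<alpha> - \<tau>) * real k = \<alpha> * k - \<tau> * k" "(1 - \<tau>) * real k = k - \<tau> * k"
    by (simp_all add: algebra_simps)
  ultimately show ?thesis
    using many card_J by linarith
qed

lemma contamination_bounds:
  fixes p \<alpha> \<tau> :: real
  assumes "0 < p" "p < \<alpha>" "\<alpha> < 1" "0 \<le> \<tau>" "\<tau> < (\<alpha> - p) / (1 - p)"
  shows "\<tau> < 1" "p < (\<alpha> - \<tau>) / (1 - \<tau>)" "(\<alpha> - \<tau>) / (1 - \<tau>) < 1"
proof -
  have "(\<alpha> - p) / (1 - p) < 1"
    using assms(1-3) by (simp add: divide_less_eq)
  then show "\<tau> < 1"
    using assms(5) by simp
  then show "p < (\<alpha> - \<tau>) / (1 - \<tau>)" "(\<alpha> - \<tau>) / (1 - \<tau>) < 1"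
    using assms by (simp_all add: field_simps)
qed

lemma prob_far_le_exp_psi:
  fixes X :: "nat \<Rightarrow> 'b \<Rightarrow> 'a::real_normed_vector"
  assumes "prob_space M" and J: "J \<subseteq> {1..k}" and card_J: "real (card J) = (1 - \<tau>) * real k"
    and ind: "prob_space.indep_vars M (\<lambda>_. borel) X J"
    and tail: "\<And>j. j \<in> J \<Longrightarrow> measure M {\<omega> \<in> space M. norm (X j \<omega> - \<mu>) > \<epsilon>} \<le> p"
    and p: "0 < p" "p < \<alpha>" "\<alpha> < 1/2" and \<tau>: "0 \<le> \<tau>" "\<tau> < (\<alpha> - p) / (1 - p)"
    and many_far: "\<And>\<omega>. \<omega> \<in> space M \<Longrightarrow> c < norm (Y \<omega> - \<mu>) \<Longrightarrow>
                \<alpha> * k < real (card {j\<in>{1..k}. \<epsilon> < norm (X j \<omega> - \<mu>)})"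
  shows "measure M {\<omega> \<in> space M. c < norm (Y \<omega> - \<mu>)}
           \<le> exp (- real k * (1 - \<tau>) * psi ((\<alpha> - \<tau>) / (1 - \<tau>)) p)"
proof -
  interpret prob_space M by fact
  define a where "a = (\<alpha> - \<tau>) / (1 - \<tau>)"
  define U where "U = {x. \<epsilon> < norm (x - \<mu>)}"
  have U: "U \<in> sets borel"
    unfolding U_def by (intro borel_open open_Collect_less continuous_intros)
  have bounds: "\<tau> < 1" "p < a" "a < 1"
    using contamination_bounds[of p \<alpha> \<tau>] p \<tau> unfolding a_def by simp_all
  have "measure M {\<omega> \<in> space M. X j \<omega> \<in> U} \<le> p" if "j \<in> J" for j
    using tail[OF that] by (simp add: U_def)
  note chernoff = prob_card_hits_ge_le_exp_psi[OF assms(1) finite_subset[OF J finite_atLeastAtMost]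
      ind U this p(1) bounds(2,3), unfolded U_def mem_Collect_eq]
  have "a * real (card J) = (\<alpha> - \<tau>) * real k"
    unfolding a_def card_J using bounds(1) by simp
  then have "{\<omega> \<in> space M. c < norm (Y \<omega> - \<mu>)}
      \<subseteq> {\<omega> \<in> space M. a * real (card J) \<le> real (card {j\<in>J. \<epsilon> < norm (X j \<omega> - \<mu>)})}"
    using card_filter_subset_ge[OF J card_J many_far] by auto
  then have "measure M {\<omega> \<in> space M. c < norm (Y \<omega> - \<mu>)}
      \<le> measure M {\<omega> \<in> space M. a * real (card J) \<le> real (card {j\<in>J. \<epsilon> < norm (X j \<omega> - \<mu>)})}"
    using chernoff(1) by (rule finite_measure_mono)
  also have "\<dots> \<le> exp (- real k * (1 - \<tau>) * psi a p)"
    using chernoff(2) unfolding card_J by (simp add: mult_ac)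
  finally show ?thesis
    unfolding a_def .
qed

theorem mainTheorem5:
  fixes M :: "'b measure"
    and X :: "nat \<Rightarrow> 'b \<Rightarrow> 'a::banach"
    and med :: "'b \<Rightarrow> 'a"
    and \<mu> :: 'a
    and \<alpha> p \<epsilon> \<tau> :: real
    and k :: nat
    and J :: "nat set"
  assumes "prob_space M"
    and "separable_space_type TYPE('a)"
    and "reflexive_space TYPE('a)"
    and "0 < \<alpha>" "\<alpha> < 1/2" "0 < p" "p < \<alpha>" "0 < \<epsilon>"
    and "0 \<le> \<tau>" "\<tau> < (\<alpha> - p) / (1 - p)"
    and "J \<subseteq> {1..k}" "real (card J) = (1 - \<tau>) * real k"
    and "\<And>j. j \<in> {1..k} \<Longrightarrow> X j \<in> borel_measurable M"
    and "prob_space.indep_vars M (\<lambda>_. borel) X J"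
    and "\<And>j. j \<in> J \<Longrightarrow> measure M {\<omega> \<in> space M. norm (X j \<omega> - \<mu>) > \<epsilon>} \<le> p"
    and "\<And>\<omega>. \<omega> \<in> space M \<Longrightarrow> is_geom_median k (\<lambda>j. X j \<omega>) (med \<omega>)"
    and "med \<in> borel_measurable M"
  shows "measure M {\<omega> \<in> space M. norm (med \<omega> - \<mu>) > (2 * (1 - \<alpha>) / (1 - 2 * \<alpha>)) * \<epsilon>}
           \<le> exp (- real k * (1 - \<tau>) * psi ((\<alpha> - \<tau>) / (1 - \<tau>)) p)
       \<and> (hilbert_norm TYPE('a) \<longrightarrow>
           measure M {\<omega> \<in> space M. norm (med \<omega> - \<mu>) > ((1 - \<alpha>) * sqrt (1 / (1 - 2 * \<alpha>))) * \<epsilon>}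
           \<le> exp (- real k * (1 - \<tau>) * psi ((\<alpha> - \<tau>) / (1 - \<tau>)) p))"
proof (cases "k = 0")
  case True
  \<comment> \<open>without estimates every point is a geometric median, but then the bound is exp 0 = 1\<close>
  interpret prob_space M by fact
  show ?thesis
    using True by simp
next
  case False
  note tail_bound = prob_far_le_exp_psi[OF assms(1,11,12,14,15,6,7,5,9,10)]
  show ?thesis
  proof (intro conjI impI tail_bound)
    fix \<omega> assume "\<omega> \<in> space M" "2 * (1 - \<alpha>) / (1 - 2 * \<alpha>) * \<epsilon> < norm (med \<omega> - \<mu>)"
    with False show "\<alpha> * k < real (card {j\<in>{1..k}. \<epsilon> < norm (X j \<omega> - \<mu>)})"
      using assms(4,5,8,16) by (intro geom_median_many_far_banach) auto
  next
    fix \<omega> assume "hilbert_norm TYPE('a)" "\<omega> \<in> space M"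
      "(1 - \<alpha>) * sqrt (1 / (1 - 2 * \<alpha>)) * \<epsilon> < norm (med \<omega> - \<mu>)"
    with False show "\<alpha> * k < real (card {j\<in>{1..k}. \<epsilon> < norm (X j \<omega> - \<mu>)})"
      using assms(4,5,8,16) by (intro geom_median_many_far_hilbert) auto
  qed
qed

end
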